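(* There is an absolute constant $C$ such that the following holds. Let $\mathcal S$ be a family of subsets of $[n]$, let $w_S\ge0$ for $S\in\mathcal S$, and suppose that $q(z)=\mathrm{sgn}(-\theta+\sum_{S\in\mathcal S}w_Sz_S)$ (for $z\in\{0,1\}^{\mathcal S}$) is a $(\theta,m)$-LTF with $\theta\ge2m>0$. Let $f\colon\{0,1\}^n\to\{0,1\}$ be $f(x)=\mathrm{sgn}\big(-\theta+\sum_{S\in\mathcal S}w_S\cdot\bigvee_{i\in S}x_i\big)$. Then $R^{lin}_{1/3}(f)\le C\left(\frac{\theta}{m}\right)^4\log^2\frac{\theta}{m}$.
   Context: $\mathrm{sgn}(y)=0$ for $y<0$ and $\mathrm{sgn}(y)=1$ for $y\ge0$. A $(\theta,m)$-LTF is a function $\mathrm{sgn}(-\theta+\sum_{j} w_jz_j)$ on a Boolean cube with real weights $w_j\ge0$ and real threshold $\theta$, whose margin $m>0$ satisfies $m\le\min_{z}|-\theta+\sum_jw_jz_j|$. For $S\subseteq[n]$, $\chi_S(x)=\sum_{i\in S}x_i\pmod2$. Exact randomized $\mathbb F_2$-sketch complexity: for $f\colon\mathbb F_2^n\to\mathbb R$ and $\delta\in[0,1]$, $R^{lin}_\delta(f)$ is the smallest integer $k$ such that there exists a probability distribution over $k$-tuples of subsets $\mathbf S_1,\dots,\mathbf S_k\subseteq[n]$ and a function $g\colon\mathbb F_2^k\to\mathbb R$ with $\Pr_{\mathbf S_1,\dots,\mathbf S_k}[g(\chi_{\mathbf S_1}(x),\dots,\chi_{\mathbf S_k}(x))=f(x)]\ge1-\delta$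 for every $x\in\mathbb F_2^n$. *)

theory Defs
  imports "HOL-Probability.Probability"
begin

definition sgn01 :: "real \<Rightarrow> real" where
  "sgn01 y = (if y \<ge> 0 then 1 else 0)"

(* F_2^n: a point x is represented by its support X \<subseteq> {0..<n};
   chi_S(x) = sum_{i in S} x_i mod 2 *)
definition chi :: "nat set \<Rightarrow> nat set \<Rightarrow> bool" where
  "chi S X = odd (card (S \<inter> X))"

definition sketchable :: "nat \<Rightarrow> real \<Rightarrow> (nat set \<Rightarrow> real) \<Rightarrow> nat \<Rightarrow> bool" where
  "sketchable n \<delta> f k \<longleftrightarrow>
     (\<exists>(D :: nat set list pmf) (g :: bool list \<Rightarrow> real).
        (\<forall>Ss \<in> set_pmf D. length Ss = k \<and> (\<forall>S \<in> set Ss. S \<subseteq> {0..<n})) \<and>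
        (\<forall>X. X \<subseteq> {0..<n} \<longrightarrow>
           measure_pmf.prob D {Ss. g (map (\<lambda>S. chi S X) Ss) = f X} \<ge> 1 - \<delta>))"

definition R_lin :: "nat \<Rightarrow> real \<Rightarrow> (nat set \<Rightarrow> real) \<Rightarrow> nat" where
  "R_lin n \<delta> f = (LEAST k. sketchable n \<delta> f k)"

(* q(z) = sgn(-theta + sum_{S in Fam} w_S z_S), z in {0,1}^Fam represented by
   Z = {S. z_S = 1} \<subseteq> Fam, is a (theta,m)-LTF: weights nonnegative, m > 0,
   and m \<le> |-theta + sum| for all z *)
definition is_LTF :: "nat set set \<Rightarrow> (nat set \<Rightarrow> real) \<Rightarrow> real \<Rightarrow> real \<Rightarrow> bool" where
  "is_LTF Fam w \<theta> m \<longleftrightarrow>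
     (\<forall>S\<in>Fam. w S \<ge> 0) \<and> m > 0 \<and>
     (\<forall>Z. Z \<subseteq> Fam \<longrightarrow> m \<le> \<bar>- \<theta> + (\<Sum>S\<in>Z. w S)\<bar>)"

end

theory Submission
  imports Defs "HOL-Analysis.Harmonic_Numbers"
begin

text \<open>Round every weight down to a multiple of \<open>\<delta> = m/N\<close>, \<open>N = \<lceil>\<theta>/m\<rceil>\<close>, after capping it at
  \<open>\<theta> + m\<close>; this leaves \<open>O((\<theta>/m)\<^sup>2)\<close> levels. Within each level hash the sets into \<open>B = 6N\<^sup>2\<close>
  buckets, and for each bucket take \<open>t = \<lceil>log\<^sub>2 6N\<rceil>\<close> parities of \<open>x\<close> on random subsets of the
  union of its sets; some parity is odd with probability \<open>\<ge> 1 - 2\<^sup>-\<^sup>t\<close> if \<open>x\<close> hits the bucket and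
  never otherwise. The estimate, the sum of the levels of the detected buckets, never exceeds
  the weight of the sets hit by \<open>x\<close>, since distinct detected buckets contain distinct hit sets.
  Conversely, if \<open>f(x) = 1\<close> then, by the margin, the hit sets of weight \<open>\<ge> 2m\<close> already carry
  weight \<open>\<ge> \<theta> + m\<close>, so at most \<open>N\<close> of them carry capped weight \<open>\<ge> \<theta> + m\<close>. With probability
  \<open>\<ge> 2/3\<close> they fall into distinct, detected buckets, and rounding loses at most \<open>N\<delta> = m\<close>.
  The sketch has \<open>O((\<theta>/m)\<^sup>2) \<cdot> B \<cdot> t = O((\<theta>/m)\<^sup>4 log (\<theta>/m))\<close> parities.\<close>

lemma set_zip_map_self: "set (zip xs (map F xs)) = (\<lambda>x. (x, F x)) ` set xs"
  by (induction xs) auto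

lemma prob_even_card_Int_uniform_subset:
  assumes "finite A" "E \<subseteq> A" "E \<noteq> {}"
  shows "measure_pmf.prob (pmf_of_set (Pow A)) {R. even (card (R \<inter> E))} = 1/2"
proof -
  obtain e where e: "e \<in> E" using assms(3) by auto
  have fin_E: "finite E" using assms(1,2) finite_subset by auto
  define toggle where "toggle R = (if e \<in> R then R - {e} else insert e R)" for R
  define Ev where "Ev = {R\<in>Pow A. even (card (R \<inter> E))}"
  define Od where "Od = {R\<in>Pow A. odd (card (R \<inter> E))}"
  have toggle_toggle: "toggle (toggle R) = R" for R unfolding toggle_def by auto
  have toggle_parity: "odd (card (toggle R \<inter> E)) \<longleftrightarrow> even (card (R \<inter> E))" for R
  proof (cases "e \<in> R")
    case True
    have "toggle R \<inter> E = (R \<inter> E) - {e}" using True unfolding toggle_def by auto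
    moreover have "card (R \<inter> E) = Suc (card ((R \<inter> E) - {e}))"
      using card.remove[of "R \<inter> E" e] True e fin_E by auto
    ultimately show ?thesis by simp
  next
    case False
    have "toggle R \<inter> E = insert e (R \<inter> E)" using False e unfolding toggle_def by auto
    then show ?thesis using False fin_E by simp
  qed
  have toggle_Pow: "toggle R \<in> Pow A" if "R \<in> Pow A" for R
    using that e assms(2) unfolding toggle_def by auto
  have "bij_betw toggle Ev Od"
    by (rule bij_betwI[where g=toggle])
       (use toggle_Pow toggle_parity toggle_toggle in \<open>auto simp: Ev_def Od_def\<close>)
  then have "card Ev = card Od" by (rule bij_betw_same_card)
  moreover have "card Ev + card Od = card (Pow A)"
    using assms(1) by (subst card_Un_disjoint[symmetric]) (auto simp: Ev_def Od_def intro: arg_cong[where f=card])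
  ultimately have "2 * real (card Ev) = real (card (Pow A))" by linarith
  moreover have "Pow A \<inter> {R. even (card (R \<inter> E))} = Ev" unfolding Ev_def by blast
  moreover have "card (Pow A) > 0" using assms(1) by (simp add: card_Pow)
  ultimately show ?thesis using assms(1) by (subst measure_pmf_of_set) (auto simp: field_simps)
qed

lemma prob_all_even_Pi_pmf:
  assumes "finite J" "J0 \<subseteq> J" "finite A" "E \<subseteq> A" "E \<noteq> {}"
  shows "measure_pmf.prob (Pi_pmf J {} (\<lambda>_. pmf_of_set (Pow A))) {\<rho>. \<forall>j\<in>J0. even (card (\<rho> j \<inter> E))}
         = (1/2) ^ card J0"
proof -
  let ?P = "\<lambda>j. if j \<in> J0 then {R. even (card (R \<inter> E))} else UNIV"
  have "{\<rho>. \<forall>j\<in>J0. even (card (\<rho> j \<inter> E))} = Pi J ?P"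
    using assms(2) by (auto simp: Pi_def)
  then have "measure_pmf.prob (Pi_pmf J {} (\<lambda>_. pmf_of_set (Pow A))) {\<rho>. \<forall>j\<in>J0. even (card (\<rho> j \<inter> E))}
     = (\<Prod>j\<in>J. measure_pmf.prob (pmf_of_set (Pow A)) (?P j))"
    using assms(1) by (simp add: measure_Pi_pmf_Pi)
  also have "\<dots> = (\<Prod>j\<in>J. if j \<in> J0 then 1/2 else 1)"
    using prob_even_card_Int_uniform_subset[OF assms(3-5)] by (intro prod.cong) auto
  also have "\<dots> = (1/2) ^ card J0"
    using assms(1,2) by (subst prod.If_cases) (auto simp: Int_absorb1)
  finally show ?thesis .
qed

lemma prob_hash_collision:
  fixes B :: nat
  assumes "finite F" "S \<in> F" "S' \<in> F" "S \<noteq> S'" "B > 0"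
  shows "measure_pmf.prob (Pi_pmf F 0 (\<lambda>_. pmf_of_set {0..<B})) {h. h S mod B = h S' mod B} \<le> 1 / B"
proof -
  let ?M = "Pi_pmf F 0 (\<lambda>_. pmf_of_set {0..<B})"
  define P where "P b = Pi F (\<lambda>x. if x = S \<or> x = S' then {y. y mod B = b} else UNIV)" for b
  have "{h. h S mod B = h S' mod B} \<subseteq> (\<Union>b\<in>{..<B}. P b)"
  proof
    fix h assume "h \<in> {h. h S mod B = h S' mod B}"
    then have "h \<in> P (h S mod B)" by (auto simp: P_def)
    then show "h \<in> (\<Union>b\<in>{..<B}. P b)" using assms(5) by auto
  qed
  have prob_residue: "measure_pmf.prob (pmf_of_set {0..<B}) {y. y mod B = b} = 1 / B" if "b < B" for b
  proof -
    have "{0..<B} \<inter> {y. y mod B = b} = {b}" using that by auto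
    then show ?thesis using assms(5) by (subst measure_pmf_of_set) auto
  qed
  have prob_P: "measure_pmf.prob ?M (P b) = (1/B)^2" if "b < B" for b
  proof -
    have "measure_pmf.prob ?M (P b) = (\<Prod>x\<in>F. measure_pmf.prob (pmf_of_set {0..<B})
             (if x = S \<or> x = S' then {y. y mod B = b} else UNIV))"
      unfolding P_def using assms(1) by (rule measure_Pi_pmf_Pi)
    also have "\<dots> = (\<Prod>x\<in>F. if x = S \<or> x = S' then 1/B else 1)"
      by (intro prod.cong) (auto simp: prob_residue that)
    also have "\<dots> = (1/B) ^ card (F \<inter> {x. x = S \<or> x = S'})"
      using assms(1) by (subst prod.If_cases) auto
    also have "F \<inter> {x. x = S \<or> x = S'} = {S, S'}" using assms(2,3) by auto
    finally show ?thesis using assms(4) by (simp add: power2_eq_square)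
  qed
  have "measure_pmf.prob ?M {h. h S mod B = h S' mod B} \<le> measure_pmf.prob ?M (\<Union>b\<in>{..<B}. P b)"
    using \<open>{h. h S mod B = h S' mod B} \<subseteq> _\<close> by (intro measure_pmf.finite_measure_mono) auto
  also have "\<dots> \<le> (\<Sum>b\<in>{..<B}. measure_pmf.prob ?M (P b))"
    by (intro measure_pmf.finite_measure_subadditive_finite) auto
  also have "\<dots> = 1 / B" using assms(5) by (simp add: prob_P power2_eq_square)
  finally show ?thesis .
qed

lemma measure_pair_pmf_le:
  assumes "\<And>x. measure_pmf.prob q {y. (x, y) \<in> A} \<le> c" "c \<ge> 0"
  shows "measure_pmf.prob (pair_pmf p q) A \<le> c"
proof -
  have "emeasure (measure_pmf (pair_pmf p q)) A
      = (\<integral>\<^sup>+ x. emeasure (measure_pmf (map_pmf (Pair x) q)) A \<partial>measure_pmf p)"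
    unfolding pair_pmf_def emeasure_bind_pmf by (simp add: map_pmf_def)
  also have "\<dots> \<le> (\<integral>\<^sup>+ x. ennreal c \<partial>measure_pmf p)"
  proof (rule nn_integral_mono)
    fix x
    have "Pair x -` A = {y. (x, y) \<in> A}" by auto
    then show "emeasure (measure_pmf (map_pmf (Pair x) q)) A \<le> ennreal c"
      using assms(1) by (simp add: measure_pmf.emeasure_eq_measure ennreal_leI)
  qed
  also have "\<dots> = ennreal c" by (simp add: measure_pmf.emeasure_space_1)
  finally show ?thesis using assms(2) by (simp add: measure_pmf.emeasure_eq_measure)
qed

text \<open>The margin forbids subset sums in \<open>(\<theta> - m, \<theta> + m)\<close>, so adding sets of weight \<open>< 2m\<close>
  to a family of sum \<open>\<le> \<theta> - m\<close> can never push it past \<open>\<theta>\<close>.\<close>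
lemma margin_heavy_sum:
  fixes w :: "'a \<Rightarrow> real"
  assumes "finite Z" and margin: "\<And>Y. Y \<subseteq> Z \<Longrightarrow> m \<le> \<bar>- \<theta> + (\<Sum>S\<in>Y. w S)\<bar>"
    and "m > 0" and "(\<Sum>S\<in>Z. w S) \<ge> \<theta>"
  shows "(\<Sum>S\<in>{S\<in>Z. w S \<ge> 2*m}. w S) \<ge> \<theta> + m"
proof (rule ccontr)
  define Zh where "Zh = {S\<in>Z. w S \<ge> 2*m}"
  assume "\<not> ?thesis"
  then have "(\<Sum>S\<in>Zh. w S) \<le> \<theta> - m" using margin[of Zh] unfolding Zh_def by auto
  have "(\<Sum>S\<in>Zh \<union> L. w S) \<le> \<theta> - m" if "finite L" "L \<subseteq> Z - Zh" for L
    using that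
  proof (induction L rule: finite_induct)
    case empty
    then show ?case using \<open>(\<Sum>S\<in>Zh. w S) \<le> \<theta> - m\<close> by simp
  next
    case (insert x L)
    have light: "w x < 2*m" and "x \<notin> Zh \<union> L" using insert by (auto simp: Zh_def)
    moreover have "finite (Zh \<union> L)" using \<open>finite Z\<close> insert by (auto simp: Zh_def)
    ultimately have split: "(\<Sum>S\<in>Zh \<union> insert x L. w S) = w x + (\<Sum>S\<in>Zh \<union> L. w S)" by simp
    have "Zh \<union> insert x L \<subseteq> Z" using insert by (auto simp: Zh_def)
    then show ?case using margin[of "Zh \<union> insert x L"] insert split light by auto
  qed
  from this[of "Z - Zh"] have "(\<Sum>S\<in>Z. w S) \<le> \<theta> - m"
    using \<open>finite Z\<close> by (simp add: Un_absorb1 Zh_def)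
  then show False using assms(3,4) by linarith
qed

lemma exists_small_subset_capped_sum:
  fixes w :: "'a \<Rightarrow> real"
  assumes "finite Z" and heavy: "\<And>S. S \<in> Z \<Longrightarrow> w S \<ge> 2*m" and sum: "(\<Sum>S\<in>Z. w S) \<ge> \<theta> + m"
    and "m > 0" "\<theta> \<ge> 2*m" "\<theta> \<le> real N * m"
  shows "\<exists>T\<subseteq>Z. card T \<le> N \<and> (\<Sum>S\<in>T. min (w S) (\<theta> + m)) \<ge> \<theta> + m"
proof (cases "card Z \<le> N")
  case True
  have "(\<Sum>S\<in>Z. min (w S) (\<theta> + m)) \<ge> \<theta> + m"
  proof (cases "\<exists>S\<in>Z. w S \<ge> \<theta> + m")
    case True
    then obtain S where "S \<in> Z" "w S \<ge> \<theta> + m" by blast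
    moreover have "min (w S) (\<theta> + m) \<le> (\<Sum>S\<in>Z. min (w S) (\<theta> + m))"
      by (rule member_le_sum[OF \<open>S \<in> Z\<close> _ \<open>finite Z\<close>]) (use heavy assms(4,5) in fastforce)
    ultimately show ?thesis by simp
  next
    case False
    then have "(\<Sum>S\<in>Z. min (w S) (\<theta> + m)) = (\<Sum>S\<in>Z. w S)" by (intro sum.cong) auto
    then show ?thesis using sum by simp
  qed
  then show ?thesis using True by blast
next
  case False
  then obtain T where T: "T \<subseteq> Z" "card T = N"
    by (metis nat_le_linear obtain_subset_with_card_n)
  have "\<theta> + m \<le> real N * (2*m)" using assms(4-6) by linarith
  also have "\<dots> = (\<Sum>S\<in>T. 2*m)" using T by simp
  also have "\<dots> \<le> (\<Sum>S\<in>T. min (w S) (\<theta> + m))"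
    by (intro sum_mono) (use T heavy assms(4,5) in fastforce)
  finally show ?thesis using T by auto
qed

locale ltf_of_ors =
  fixes n :: nat and Fam :: "nat set set" and w :: "nat set \<Rightarrow> real" and \<theta> m :: real
  assumes Fam_subset: "Fam \<subseteq> Pow {0..<n}" and LTF: "is_LTF Fam w \<theta> m" and two_m_le: "2*m \<le> \<theta>"
begin

definition "target = (\<lambda>X. sgn01 (- \<theta> + (\<Sum>S\<in>Fam. w S * (if S \<inter> X \<noteq> {} then 1 else 0))))"

definition "N = nat \<lceil>\<theta>/m\<rceil>"
definition "step = m / real N"
definition "level S = nat \<lfloor>min (w S) (\<theta> + m) / step\<rfloor>"
definition "num_levels = nat \<lfloor>(\<theta> + m) / step\<rfloor> + 1"
definition "num_buckets = 6 * N^2"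
definition "reps = nat \<lceil>log 2 (6 * real N)\<rceil>"

text \<open>The bucket of \<open>S\<close> under the hash \<open>h\<close> is \<open>(level S, h S mod num_buckets)\<close>; reducing
  modulo \<open>num_buckets\<close> keeps this in range for every \<open>h\<close>, not only for those drawn by \<open>hash_pmf\<close>.\<close>

definition "hit X = {S\<in>Fam. S \<inter> X \<noteq> {}}"
definition "bucket h c b = \<Union>{S\<in>Fam. level S = c \<and> h S mod num_buckets = b}"
definition "detected h \<rho> X c b \<longleftrightarrow> (\<exists>j<reps. odd (card (bucket h c b \<inter> \<rho> (c, b, j) \<inter> X)))"
definition "estimate h \<rho> X = (\<Sum>p\<in>{..<num_levels} \<times> {..<num_buckets}.
    if detected h \<rho> X (fst p) (snd p) then real (fst p) * step else 0)"

lemma finite_Fam: "finite Fam"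
  using Fam_subset finite_subset by (metis finite_Pow_iff finite_atLeastLessThan)

lemma weight_nonneg: "S \<in> Fam \<Longrightarrow> w S \<ge> 0"
  using LTF unfolding is_LTF_def by auto

lemma m_pos: "m > 0"
  using LTF unfolding is_LTF_def by auto

lemma margin: "Z \<subseteq> Fam \<Longrightarrow> m \<le> \<bar>- \<theta> + (\<Sum>S\<in>Z. w S)\<bar>"
  using LTF unfolding is_LTF_def by auto

lemma ratio_ge_2: "\<theta>/m \<ge> 2"
  using two_m_le m_pos by (simp add: field_simps)

lemma N_ge: "real N \<ge> \<theta>/m"
  unfolding N_def by linarith

lemma N_less: "real N < \<theta>/m + 1"
  unfolding N_def using ratio_ge_2 by linarith

lemma N_ge_2: "N \<ge> 2"
  using N_ge ratio_ge_2 by linarith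

lemma step_pos: "step > 0"
  unfolding step_def using m_pos N_ge_2 by simp

lemma N_times_step: "real N * step = m"
  unfolding step_def using N_ge_2 by simp

lemma num_buckets_pos: "num_buckets > 0"
  unfolding num_buckets_def using N_ge_2 by simp

lemma level_eq_floor: "S \<in> Fam \<Longrightarrow> real (level S) = of_int \<lfloor>min (w S) (\<theta> + m) / step\<rfloor>"
  unfolding level_def using weight_nonneg[of S] two_m_le m_pos step_pos by simp

lemma level_step_le: "S \<in> Fam \<Longrightarrow> real (level S) * step \<le> min (w S) (\<theta> + m)"
proof -
  assume "S \<in> Fam"
  then have "real (level S) \<le> min (w S) (\<theta> + m) / step" using level_eq_floor by simp
  then show ?thesis using step_pos by (simp add: field_simps)
qed

lemma level_step_gt: "S \<in> Fam \<Longrightarrow> real (level S) * step > min (w S) (\<theta> + m) - step"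
proof -
  assume "S \<in> Fam"
  then have "real (level S) > min (w S) (\<theta> + m) / step - 1" using level_eq_floor by simp
  then show ?thesis using step_pos by (simp add: field_simps)
qed

lemma level_less: "S \<in> Fam \<Longrightarrow> level S < num_levels"
proof -
  assume "S \<in> Fam"
  have "min (w S) (\<theta> + m) / step \<le> (\<theta> + m) / step" using step_pos by (simp add: divide_right_mono)
  then have "\<lfloor>min (w S) (\<theta> + m) / step\<rfloor> \<le> \<lfloor>(\<theta> + m) / step\<rfloor>" by (rule floor_mono)
  then show ?thesis unfolding level_def num_levels_def by linarith
qed

lemma finite_hit: "finite (hit X)"
  unfolding hit_def using finite_Fam by simp

lemma target_eq: "target X = sgn01 (- \<theta> + (\<Sum>S\<in>hit X. w S))"
proof -
  have "(\<Sum>S\<in>Fam. w S * (if S \<inter> X \<noteq> {} then 1 else 0)) = (\<Sum>S\<in>Fam. if S \<inter> X \<noteq> {} then w S else 0)"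
    by (intro sum.cong) auto
  then show ?thesis unfolding target_def hit_def using finite_Fam by (simp add: sum.inter_filter)
qed

lemma bucket_subset: "bucket h c b \<subseteq> {0..<n}"
  unfolding bucket_def using Fam_subset by auto

lemma estimate_eq_sum_detected:
  "estimate h \<rho> X = (\<Sum>p\<in>{p \<in> {..<num_levels} \<times> {..<num_buckets}. detected h \<rho> X (fst p) (snd p)}.
     real (fst p) * step)"
  unfolding estimate_def by (simp add: sum.inter_filter)

text \<open>A detected bucket contains a set hit by \<open>X\<close>, which determines the bucket.\<close>
lemma estimate_le_hit_weight: "estimate h \<rho> X \<le> (\<Sum>S\<in>hit X. w S)"
proof -
  define P where "P = {p \<in> {..<num_levels} \<times> {..<num_buckets}. detected h \<rho> X (fst p) (snd p)}"
  have "\<exists>S. S \<in> hit X \<and> level S = fst p \<and> h S mod num_buckets = snd p" if "p \<in> P" for p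
  proof -
    from that obtain j where "odd (card (bucket h (fst p) (snd p) \<inter> \<rho> (fst p, snd p, j) \<inter> X))"
      unfolding P_def detected_def by auto
    then have "bucket h (fst p) (snd p) \<inter> \<rho> (fst p, snd p, j) \<inter> X \<noteq> {}" by (intro notI) simp
    then obtain x where "x \<in> bucket h (fst p) (snd p)" "x \<in> X" by blast
    then show ?thesis unfolding bucket_def hit_def by auto
  qed
  then obtain \<sigma> where \<sigma>: "\<And>p. p \<in> P \<Longrightarrow> \<sigma> p \<in> hit X \<and> level (\<sigma> p) = fst p \<and> h (\<sigma> p) mod num_buckets = snd p"
    by metis
  have "inj_on \<sigma> P"
    by (rule inj_onI) (metis \<sigma> prod.collapse)
  have "estimate h \<rho> X = (\<Sum>p\<in>P. real (fst p) * step)"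
    unfolding P_def by (rule estimate_eq_sum_detected)
  also have "\<dots> \<le> (\<Sum>p\<in>P. w (\<sigma> p))"
  proof (rule sum_mono)
    fix p assume "p \<in> P"
    then have "\<sigma> p \<in> Fam" "level (\<sigma> p) = fst p" using \<sigma> unfolding hit_def by auto
    then show "real (fst p) * step \<le> w (\<sigma> p)" using level_step_le[of "\<sigma> p"] by simp
  qed
  also have "\<dots> = (\<Sum>S\<in>\<sigma> ` P. w S)" using \<open>inj_on \<sigma> P\<close> by (simp add: sum.reindex)
  also have "\<dots> \<le> (\<Sum>S\<in>hit X. w S)"
    by (rule sum_mono2[OF finite_hit]) (use \<sigma> weight_nonneg in \<open>auto simp: hit_def\<close>)
  finally show ?thesis .
qed

lemma estimate_ge_threshold:
  assumes T: "T \<subseteq> hit X" "card T \<le> N" "(\<Sum>S\<in>T. min (w S) (\<theta> + m)) \<ge> \<theta> + m"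
    and inj: "inj_on (\<lambda>S. h S mod num_buckets) T"
    and det: "\<And>S. S \<in> T \<Longrightarrow> detected h \<rho> X (level S) (h S mod num_buckets)"
  shows "estimate h \<rho> X \<ge> \<theta>"
proof -
  define P where "P = {p \<in> {..<num_levels} \<times> {..<num_buckets}. detected h \<rho> X (fst p) (snd p)}"
  define \<pi> where "\<pi> S = (level S, h S mod num_buckets)" for S
  have T_Fam: "S \<in> Fam" if "S \<in> T" for S using T(1) that unfolding hit_def by auto
  have "inj_on \<pi> T" using inj unfolding \<pi>_def inj_on_def by auto
  have "\<pi> ` T \<subseteq> P" unfolding P_def \<pi>_def using det T_Fam level_less num_buckets_pos by auto
  have "\<theta> = (\<theta> + m) - real N * step" using N_times_step by simp
  also have "\<dots> \<le> (\<Sum>S\<in>T. min (w S) (\<theta> + m)) - real (card T) * step"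
    using T(2,3) step_pos mult_right_mono[of "real (card T)" "real N" step] by linarith
  also have "\<dots> = (\<Sum>S\<in>T. min (w S) (\<theta> + m) - step)" by (simp add: sum_subtractf)
  also have "\<dots> \<le> (\<Sum>S\<in>T. real (level S) * step)"
    by (intro sum_mono less_imp_le level_step_gt T_Fam)
  also have "\<dots> = (\<Sum>p\<in>\<pi> ` T. real (fst p) * step)"
    using sum.reindex[OF \<open>inj_on \<pi> T\<close>, of "\<lambda>p. real (fst p) * step"] by (simp add: \<pi>_def)
  also have "\<dots> \<le> (\<Sum>p\<in>P. real (fst p) * step)"
    by (rule sum_mono2) (use \<open>\<pi> ` T \<subseteq> P\<close> step_pos in \<open>auto simp: P_def\<close>)
  also have "\<dots> = estimate h \<rho> X"
    unfolding P_def by (rule estimate_eq_sum_detected[symmetric])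
  finally show ?thesis .
qed

lemma exists_small_hit_subfamily:
  assumes "(\<Sum>S\<in>hit X. w S) \<ge> \<theta>"
  shows "\<exists>T\<subseteq>hit X. card T \<le> N \<and> (\<Sum>S\<in>T. min (w S) (\<theta> + m)) \<ge> \<theta> + m"
proof -
  have "(\<Sum>S\<in>{S\<in>hit X. w S \<ge> 2*m}. w S) \<ge> \<theta> + m"
    by (rule margin_heavy_sum[OF finite_hit _ m_pos assms]) (use margin in \<open>auto simp: hit_def\<close>)
  moreover have "\<theta> \<le> real N * m" using N_ge m_pos by (simp add: field_simps)
  moreover have "finite {S\<in>hit X. w S \<ge> 2*m}" using finite_hit by simp
  ultimately have "\<exists>T\<subseteq>{S\<in>hit X. w S \<ge> 2*m}. card T \<le> N \<and> (\<Sum>S\<in>T. min (w S) (\<theta> + m)) \<ge> \<theta> + m"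
    using m_pos two_m_le by (intro exists_small_subset_capped_sum) auto
  then show ?thesis by blast
qed

definition "tests = {..<num_levels} \<times> {..<num_buckets} \<times> {..<reps}"
definition "test_list = List.product [0..<num_levels] (List.product [0..<num_buckets] [0..<reps])"
definition "test_set h \<rho> i = bucket h (fst i) (fst (snd i)) \<inter> \<rho> i"
definition "hash_pmf = Pi_pmf Fam 0 (\<lambda>_. pmf_of_set {0..<num_buckets})"
definition "parity_pmf = Pi_pmf tests {} (\<lambda>_. pmf_of_set (Pow {0..<n}))"
definition "sketch_pmf = map_pmf (\<lambda>(h, \<rho>). map (test_set h \<rho>) test_list) (pair_pmf hash_pmf parity_pmf)"
definition "decoder bs = sgn01 (- \<theta> + (\<Sum>p\<in>{..<num_levels} \<times> {..<num_buckets}.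
    if (\<exists>j. ((fst p, snd p, j), True) \<in> set (zip test_list bs)) then real (fst p) * step else 0))"

lemma set_test_list: "set test_list = tests"
  unfolding test_list_def tests_def by auto

lemma length_test_list: "length test_list = num_levels * num_buckets * reps"
  unfolding test_list_def by simp

lemma decoder_sketch:
  "decoder (map (\<lambda>S. chi S X) (map (test_set h \<rho>) test_list)) = sgn01 (- \<theta> + estimate h \<rho> X)"
proof -
  define F where "F i = chi (test_set h \<rho> i) X" for i
  have bits: "map (\<lambda>S. chi S X) (map (test_set h \<rho>) test_list) = map F test_list"
    unfolding F_def by simp
  have zip_eq: "set (zip test_list (map F test_list)) = (\<lambda>i. (i, F i)) ` tests"
    by (simp only: set_zip_map_self set_test_list)
  have read_off: "(\<exists>j. ((fst p, snd p, j), True) \<in> (\<lambda>i. (i, F i)) ` tests) = detected h \<rho> X (fst p) (snd p)"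
    if "p \<in> {..<num_levels} \<times> {..<num_buckets}" for p
  proof -
    have "(\<exists>j. ((fst p, snd p, j), True) \<in> (\<lambda>i. (i, F i)) ` tests)
        = (\<exists>j. (fst p, snd p, j) \<in> tests \<and> F (fst p, snd p, j))"
      by blast
    also have "\<dots> = (\<exists>j<reps. F (fst p, snd p, j))" using that unfolding tests_def by auto
    finally show ?thesis unfolding detected_def F_def test_set_def chi_def
      by (simp add: Int_commute Int_left_commute)
  qed
  have "(\<Sum>p\<in>{..<num_levels} \<times> {..<num_buckets}.
          if (\<exists>j. ((fst p, snd p, j), True) \<in> set (zip test_list (map F test_list))) then real (fst p) * step else 0)
      = estimate h \<rho> X"
    unfolding estimate_def zip_eq by (rule sum.cong[OF refl]) (simp only: read_off)
  then show ?thesis unfolding decoder_def bits by simp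
qed

lemma half_pow_reps_le: "(1/2::real) ^ reps \<le> 1 / (6 * real N)"
proof -
  have pos: "6 * real N > 0" using N_ge_2 by simp
  have "log 2 (6 * real N) \<le> real reps" unfolding reps_def by linarith
  then have "2 powr (log 2 (6 * real N)) \<le> 2 powr real reps" by (rule powr_mono) simp
  then have "6 * real N \<le> 2 ^ reps" using pos by (simp add: powr_realpow)
  then show ?thesis using pos by (simp add: field_simps)
qed

lemma prob_hash_not_inj_on:
  assumes "T \<subseteq> Fam" "card T \<le> N"
  shows "measure_pmf.prob hash_pmf {h. \<not> inj_on (\<lambda>S. h S mod num_buckets) T} \<le> 1/6"
proof -
  define Pairs where "Pairs = {q \<in> T \<times> T. fst q \<noteq> snd q}"
  have "finite T" using assms(1) finite_Fam finite_subset by blast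
  have "{h. \<not> inj_on (\<lambda>S. h S mod num_buckets) T}
      \<subseteq> (\<Union>q\<in>Pairs. {h. h (fst q) mod num_buckets = h (snd q) mod num_buckets})"
    unfolding Pairs_def inj_on_def by auto
  then have "measure_pmf.prob hash_pmf {h. \<not> inj_on (\<lambda>S. h S mod num_buckets) T}
      \<le> measure_pmf.prob hash_pmf (\<Union>q\<in>Pairs. {h. h (fst q) mod num_buckets = h (snd q) mod num_buckets})"
    by (rule measure_pmf.finite_measure_mono) simp
  also have "\<dots> \<le> (\<Sum>q\<in>Pairs. measure_pmf.prob hash_pmf {h. h (fst q) mod num_buckets = h (snd q) mod num_buckets})"
    using \<open>finite T\<close> unfolding Pairs_def by (intro measure_pmf.finite_measure_subadditive_finite) auto
  also have "\<dots> \<le> (\<Sum>q\<in>Pairs. 1 / real num_buckets)"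
    unfolding hash_pmf_def using assms(1)
    by (intro sum_mono prob_hash_collision finite_Fam num_buckets_pos) (auto simp: Pairs_def)
  also have "\<dots> \<le> real (N^2) / real num_buckets"
  proof -
    have "card Pairs \<le> card (T \<times> T)" unfolding Pairs_def using \<open>finite T\<close> by (intro card_mono) auto
    also have "\<dots> \<le> N^2" using assms(2) by (simp add: card_cartesian_product power2_eq_square mult_le_mono)
    finally show ?thesis using num_buckets_pos by (simp add: divide_right_mono)
  qed
  also have "\<dots> = 1/6" unfolding num_buckets_def using N_ge_2 by simp
  finally show ?thesis .
qed

lemma prob_bucket_undetected:
  assumes "S \<in> hit X"
  shows "measure_pmf.prob parity_pmf {\<rho>. \<not> detected h \<rho> X (level S) (h S mod num_buckets)} = (1/2) ^ reps"
proof -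
  let ?c = "level S" and ?b = "h S mod num_buckets"
  define J0 where "J0 = (\<lambda>j. (?c, ?b, j)) ` {..<reps}"
  define E where "E = bucket h ?c ?b \<inter> X"
  have "{\<rho>. \<not> detected h \<rho> X ?c ?b} = {\<rho>. \<forall>j\<in>J0. even (card (\<rho> j \<inter> E))}"
    unfolding detected_def J0_def E_def by (auto simp: Int_commute Int_left_commute)
  also have "measure_pmf.prob parity_pmf \<dots> = (1/2) ^ card J0"
    unfolding parity_pmf_def
  proof (rule prob_all_even_Pi_pmf)
    show "finite tests" unfolding tests_def by simp
    show "J0 \<subseteq> tests" unfolding J0_def tests_def
      using assms level_less num_buckets_pos by (auto simp: hit_def)
    show "E \<subseteq> {0..<n}" unfolding E_def using bucket_subset by auto
    show "E \<noteq> {}" using assms unfolding E_def bucket_def hit_def by auto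
  qed simp
  also have "card J0 = reps" unfolding J0_def by (simp add: card_image inj_on_def)
  finally show ?thesis .
qed

lemma prob_some_bucket_undetected:
  assumes "T \<subseteq> hit X" "card T \<le> N"
  shows "measure_pmf.prob (pair_pmf hash_pmf parity_pmf)
           {(h, \<rho>). \<exists>S\<in>T. \<not> detected h \<rho> X (level S) (h S mod num_buckets)} \<le> 1/6"
proof -
  have "finite T" using assms(1) finite_hit finite_subset by blast
  have "{(h, \<rho>). \<exists>S\<in>T. \<not> detected h \<rho> X (level S) (h S mod num_buckets)}
      = (\<Union>S\<in>T. {(h, \<rho>). \<not> detected h \<rho> X (level S) (h S mod num_buckets)})" by auto
  then have "measure_pmf.prob (pair_pmf hash_pmf parity_pmf)
           {(h, \<rho>). \<exists>S\<in>T. \<not> detected h \<rho> X (level S) (h S mod num_buckets)}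
      \<le> (\<Sum>S\<in>T. measure_pmf.prob (pair_pmf hash_pmf parity_pmf)
          {(h, \<rho>). \<not> detected h \<rho> X (level S) (h S mod num_buckets)})"
    using \<open>finite T\<close> by (simp only:) (intro measure_pmf.finite_measure_subadditive_finite, auto)
  also have "\<dots> \<le> (\<Sum>S\<in>T. 1 / (6 * real N))"
  proof (rule sum_mono)
    fix S assume "S \<in> T"
    then have "S \<in> hit X" using assms(1) by blast
    show "measure_pmf.prob (pair_pmf hash_pmf parity_pmf)
        {(h, \<rho>). \<not> detected h \<rho> X (level S) (h S mod num_buckets)} \<le> 1 / (6 * real N)"
    proof (rule measure_pair_pmf_le)
      fix h
      have "measure_pmf.prob parity_pmf {\<rho>. \<not> detected h \<rho> X (level S) (h S mod num_buckets)}
          \<le> 1 / (6 * real N)"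
        using prob_bucket_undetected[OF \<open>S \<in> hit X\<close>] half_pow_reps_le by simp
      then show "measure_pmf.prob parity_pmf
          {\<rho>. (h, \<rho>) \<in> {(h, \<rho>). \<not> detected h \<rho> X (level S) (h S mod num_buckets)}} \<le> 1 / (6 * real N)"
        by simp
    qed simp
  qed
  also have "\<dots> = real (card T) / (6 * real N)" by simp
  also have "\<dots> \<le> real N / (6 * real N)"
    using assms(2) by (intro divide_right_mono) auto
  also have "\<dots> = 1/6" using N_ge_2 by simp
  finally show ?thesis .
qed

lemma prob_estimate_correct:
  "measure_pmf.prob (pair_pmf hash_pmf parity_pmf) {(h, \<rho>). sgn01 (- \<theta> + estimate h \<rho> X) = target X} \<ge> 2/3"
proof (cases "(\<Sum>S\<in>hit X. w S) < \<theta>")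
  case True
  have "sgn01 (- \<theta> + estimate h \<rho> X) = target X" for h \<rho>
    using estimate_le_hit_weight[of h \<rho> X] True by (simp add: target_eq sgn01_def)
  then show ?thesis by simp
next
  case False
  then have "(\<Sum>S\<in>hit X. w S) \<ge> \<theta>" by simp
  then obtain T where T: "T \<subseteq> hit X" "card T \<le> N" "(\<Sum>S\<in>T. min (w S) (\<theta> + m)) \<ge> \<theta> + m"
    using exists_small_hit_subfamily by blast
  let ?M = "pair_pmf hash_pmf parity_pmf"
  define Good where "Good = {(h, \<rho>). sgn01 (- \<theta> + estimate h \<rho> X) = target X}"
  define Collide where "Collide = {h. \<not> inj_on (\<lambda>S. h S mod num_buckets) T}"
  define Missed where "Missed = {(h, \<rho>). \<exists>S\<in>T. \<not> detected h \<rho> X (level S) (h S mod num_buckets)}"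
  have "- Good \<subseteq> fst -` Collide \<union> Missed"
  proof
    fix hr assume "hr \<in> - Good"
    moreover obtain h \<rho> where hr: "hr = (h, \<rho>)" by (cases hr)
    moreover have "target X = 1" using \<open>(\<Sum>S\<in>hit X. w S) \<ge> \<theta>\<close> by (simp add: target_eq sgn01_def)
    ultimately have "\<not> estimate h \<rho> X \<ge> \<theta>" by (auto simp: Good_def sgn01_def)
    then show "hr \<in> fst -` Collide \<union> Missed"
      using estimate_ge_threshold[OF T] by (auto simp: hr Collide_def Missed_def)
  qed
  then have "measure_pmf.prob ?M (- Good) \<le> measure_pmf.prob ?M (fst -` Collide) + measure_pmf.prob ?M Missed"
    by (intro order.trans[OF measure_pmf.finite_measure_mono measure_Un_le]) auto
  also have "measure_pmf.prob ?M (fst -` Collide) = measure_pmf.prob hash_pmf Collide"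
    by (simp flip: measure_map_pmf add: map_fst_pair_pmf)
  also have "\<dots> \<le> 1/6"
    unfolding Collide_def using T(1,2) by (intro prob_hash_not_inj_on) (auto simp: hit_def)
  also have "measure_pmf.prob ?M Missed \<le> 1/6"
    unfolding Missed_def using T(1,2) by (rule prob_some_bucket_undetected)
  finally have "measure_pmf.prob ?M (- Good) \<le> 1/3" by simp
  moreover have "measure_pmf.prob ?M (- Good) = 1 - measure_pmf.prob ?M Good"
    using measure_pmf.prob_compl[of Good ?M] by (simp add: Compl_eq_Diff_UNIV)
  ultimately show ?thesis unfolding Good_def by simp
qed

lemma sketchable_target: "sketchable n (1/3) target (num_levels * num_buckets * reps)"
  unfolding sketchable_def
proof (intro exI[of _ sketch_pmf] exI[of _ decoder] conjI ballI allI impI)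
  fix Ss assume "Ss \<in> set_pmf sketch_pmf"
  then obtain h \<rho> where Ss: "Ss = map (test_set h \<rho>) test_list" unfolding sketch_pmf_def by auto
  then show "length Ss = num_levels * num_buckets * reps" by (simp add: length_test_list)
  show "S \<subseteq> {0..<n}" if "S \<in> set Ss" for S
    using that Ss bucket_subset unfolding test_set_def by auto
next
  fix X :: "nat set"
  have "measure_pmf.prob sketch_pmf {Ss. decoder (map (\<lambda>S. chi S X) Ss) = target X}
      = measure_pmf.prob (pair_pmf hash_pmf parity_pmf) {(h, \<rho>). sgn01 (- \<theta> + estimate h \<rho> X) = target X}"
    unfolding sketch_pmf_def measure_map_pmf
    by (intro arg_cong[where f="measure_pmf.prob _"]) (auto simp del: map_map simp: decoder_sketch)
  then show "1 - 1/3 \<le> measure_pmf.prob sketch_pmf {Ss. decoder (map (\<lambda>S. chi S X) Ss) = target X}"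
    using prob_estimate_correct[of X] by simp
qed

lemma num_levels_le: "real num_levels \<le> 3 * (\<theta>/m)^2"
proof -
  define K where "K = \<theta>/m"
  have "K \<ge> 2" "real N < K + 1" using ratio_ge_2 N_less by (simp_all add: K_def)
  then have "2 * K \<le> K * K" by (intro mult_right_mono) auto
  have "(\<theta> + m) / step = (K + 1) * real N"
    unfolding step_def K_def using m_pos N_ge_2 by (simp add: field_simps)
  moreover have "(\<theta> + m) / step \<ge> 0" using two_m_le m_pos step_pos by simp
  ultimately have "real num_levels \<le> (K + 1) * real N + 1" unfolding num_levels_def by linarith
  also have "\<dots> \<le> (K + 1) * (K + 1) + 1"
    using \<open>real N < K + 1\<close> \<open>K \<ge> 2\<close> by (intro add_right_mono mult_left_mono) auto
  also have "\<dots> = K * K + 2 * K + 2" by (simp add: algebra_simps)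
  also have "\<dots> \<le> 3 * K^2"
    using \<open>K \<ge> 2\<close> \<open>2 * K \<le> K * K\<close> unfolding power2_eq_square by linarith
  finally show ?thesis unfolding K_def .
qed

lemma num_buckets_le: "real num_buckets \<le> 27/2 * (\<theta>/m)^2"
proof -
  define K where "K = \<theta>/m"
  have "K \<ge> 2" "real N < K + 1" using ratio_ge_2 N_less by (simp_all add: K_def)
  then have "2 * K \<le> K * K" by (intro mult_right_mono) auto
  have "real num_buckets = 6 * real N ^ 2" unfolding num_buckets_def by simp
  also have "\<dots> \<le> 6 * (K + 1)^2"
    using \<open>real N < K + 1\<close> by (intro mult_left_mono power_mono) auto
  also have "\<dots> = 6 * (K * K) + 12 * K + 6" by (simp add: power2_eq_square algebra_simps)
  also have "\<dots> \<le> 27/2 * K^2"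
    using \<open>K \<ge> 2\<close> \<open>2 * K \<le> K * K\<close> unfolding power2_eq_square by linarith
  finally show ?thesis unfolding K_def .
qed

lemma reps_le: "real reps \<le> 18 * (ln (\<theta>/m))^2"
proof -
  define K where "K = \<theta>/m"
  have "K \<ge> 2" "real N < K + 1" using ratio_ge_2 N_less by (simp_all add: K_def)
  have ln_K: "ln K \<ge> 2/3" using ln2_ge_two_thirds \<open>K \<ge> 2\<close> by (smt (verit) ln_le_cancel_iff)
  have "real reps \<le> log 2 (6 * real N) + 1"
    using N_ge_2 unfolding reps_def by (simp add: of_nat_ceiling)
  also have "\<dots> = log 2 (12 * real N)"
    using N_ge_2 log_mult_pos[of 2 "6 * real N" 2] by simp
  also have "\<dots> \<le> log 2 (K^6)"
  proof -
    have "K^5 \<ge> 2^5" using \<open>K \<ge> 2\<close> by (intro power_mono) auto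
    then have "K^6 \<ge> 32 * K" using \<open>K \<ge> 2\<close> mult_right_mono[of "2^5" "K^5" K]
      by (simp add: power_Suc2[symmetric])
    then have "12 * real N \<le> K^6" using \<open>real N < K + 1\<close> \<open>K \<ge> 2\<close> by linarith
    then show ?thesis using N_ge_2 \<open>K \<ge> 2\<close> by (subst log_le_cancel_iff) auto
  qed
  also have "\<dots> = 6 * ln K / ln 2" using \<open>K \<ge> 2\<close> by (simp add: log_def ln_realpow)
  also have "\<dots> \<le> 6 * ln K / (2/3)"
    using ln2_ge_two_thirds ln_K by (intro divide_left_mono) auto
  also have "\<dots> = 9 * ln K" by simp
  also have "\<dots> \<le> 18 * (ln K)^2"
    using ln_K mult_right_mono[of "1/2" "ln K" "ln K"] by (simp add: power2_eq_square)
  finally show ?thesis unfolding K_def .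
qed

lemma sketch_size_le: "real (num_levels * num_buckets * reps) \<le> 729 * (\<theta>/m)^4 * (ln (\<theta>/m))^2"
proof -
  have "real (num_levels * num_buckets * reps) = real num_levels * real num_buckets * real reps" by simp
  also have "\<dots> \<le> (3 * (\<theta>/m)^2) * (27/2 * (\<theta>/m)^2) * (18 * (ln (\<theta>/m))^2)"
    by (intro mult_mono num_levels_le num_buckets_le reps_le) auto
  also have "\<dots> = 729 * (\<theta>/m)^4 * (ln (\<theta>/m))^2" by (simp add: power2_eq_square power4_eq_xxxx)
  finally show ?thesis .
qed

end

theorem mainTheorem10:
  shows "\<exists>C::real. \<forall>(n::nat) (Fam::nat set set) (w::nat set \<Rightarrow> real) (\<theta>::real) (m::real).
     Fam \<subseteq> Pow {0..<n} \<and> (\<forall>S\<in>Fam. w S \<ge> 0) \<and> is_LTF Fam w \<theta> m \<and> \<theta> \<ge> 2 * m \<and> m > 0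
     \<longrightarrow> real (R_lin n (1/3)
            (\<lambda>X. sgn01 (- \<theta> + (\<Sum>S\<in>Fam. w S * (if S \<inter> X \<noteq> {} then 1 else 0)))))
         \<le> C * (\<theta> / m) ^ 4 * (ln (\<theta> / m)) ^ 2"
proof (intro exI[of _ 729] allI impI, elim conjE)
  fix n Fam w \<theta> m
  assume "Fam \<subseteq> Pow {0..<n}" "is_LTF Fam w \<theta> m" "\<theta> \<ge> 2 * m"
    \<comment> \<open>nonnegativity of the weights and \<open>m > 0\<close> are part of \<open>is_LTF\<close>\<close>
  then interpret ltf_of_ors n Fam w \<theta> m by unfold_locales
  have "R_lin n (1/3) target \<le> num_levels * num_buckets * reps"
    unfolding R_lin_def by (rule Least_le) (rule sketchable_target)
  then have "real (R_lin n (1/3) target) \<le> 729 * (\<theta>/m)^4 * (ln (\<theta>/m))^2"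
    using sketch_size_le by linarith
  then show "real (R_lin n (1/3)
            (\<lambda>X. sgn01 (- \<theta> + (\<Sum>S\<in>Fam. w S * (if S \<inter> X \<noteq> {} then 1 else 0)))))
         \<le> 729 * (\<theta> / m) ^ 4 * (ln (\<theta> / m)) ^ 2"
    unfolding target_def .
qed

end
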